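(* Let $z>0$ be fixed, $\nu=n-\tfrac12$ with $n\in\mathbb N$, and $G_\nu(z)=zY_\nu'(z)/Y_\nu(z)$. Then for sufficiently large $\nu$, \[ -\nu+\frac{z^2}{2\nu}-\frac{z^2}{6\nu^2}+O\Big(\frac1{\nu^3}\Big)\le G_\nu(z)\le-\nu+\frac{z^2}{2\nu}+\frac{7z^2}{6\nu^2}+O\Big(\frac1{\nu^3}\Big)<0, \] where the $O(\nu^{-3})$ terms are bounded by $C\nu^{-3}$ with $C$ depending on $z$.
   Context: $Y_\nu$ denotes the Bessel function of the second kind of order $\nu$. *)

theory Defs
  imports "HOL-Analysis.Analysis"
begin

text \<open>Bessel function of the first kind (series definition, real argument z > 0),
  with 1/Gamma written as rGamma (which vanishes at the poles of Gamma).\<close>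
definition BesselJ :: "real \<Rightarrow> real \<Rightarrow> real" where
  "BesselJ nu z = (\<Sum>k. (-1)^k / fact k * rGamma (real k + nu + 1) * (z/2) powr (2 * real k + nu))"

text \<open>Bessel function of the second kind for non-integer order nu.\<close>
definition BesselY :: "real \<Rightarrow> real \<Rightarrow> real" where
  "BesselY nu z = (BesselJ nu z * cos (nu * pi) - BesselJ (-nu) z) / sin (nu * pi)"

definition G :: "real \<Rightarrow> real \<Rightarrow> real" where
  "G nu z = z * deriv (BesselY nu) z / BesselY nu z"

end

theory Submission
  imports Defs "HOL-Real_Asymp.Real_Asymp"
begin

(* For nu = n - 1/2 we have cos (nu pi) = 0 and sin (nu pi) = -(-1)^n, so Y_nu = (-1)^n J_(-nu), and
   J_(-nu)(y) = rGamma (1 - nu) (y/2)^(-nu) S((y/2)^2) with S(w) = sum b_k w^k, b_0 = 1,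
   b_(k+1) = b_k / ((k+1)(nu - k - 1)).  As nu is at distance at least 1/2 from every integer,
   |b_k| <= (4/nu)^k, so truncating S after three terms and S' after two costs only O(nu^-3).
   With w = z^2/4 this gives G_nu(z) = -nu + 2w S'(w)/S(w) = -nu + z^2/(2 nu) + z^2/(2 nu^2) + o(nu^-2).
   The interval of the theorem has half-width 2z^2/(3 nu^2) around this expansion, so for large nu
   it holds already with C = 0. *)

section \<open>Geometric tail bounds for power series\<close>

lemma summable_geometric_majorant:
  fixes f :: "nat \<Rightarrow> real"
  assumes f: "\<And>k. \<bar>f k\<bar> \<le> c * r^k" and r: "0 \<le> r" "r < 1"
  shows "summable f" and "\<bar>suminf f\<bar> \<le> c / (1 - r)"
proof -
  have geom: "summable (\<lambda>k. c * r^k)" using r by (intro summable_mult summable_geometric) simp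
  have abs: "summable (\<lambda>k. \<bar>f k\<bar>)"
    by (rule summable_comparison_test[OF _ geom]) (use f in simp)
  then show "summable f" by (rule summable_rabs_cancel)
  have "\<bar>suminf f\<bar> \<le> (\<Sum>k. \<bar>f k\<bar>)" by (rule summable_rabs[OF abs])
  also have "\<dots> \<le> (\<Sum>k. c * r^k)" by (rule suminf_le[OF f abs geom])
  also have "\<dots> = c / (1 - r)" using r by (simp add: suminf_mult suminf_geometric)
  finally show "\<bar>suminf f\<bar> \<le> c / (1 - r)" .
qed

lemma power_series_tail_bound:
  fixes c :: "nat \<Rightarrow> real"
  assumes c: "\<And>k. \<bar>c k\<bar> \<le> q^k" and "0 \<le> q" "0 \<le> w" "q * w \<le> 1/2"
  shows "\<bar>(\<Sum>k. c k * w^k) - (\<Sum>k<m. c k * w^k)\<bar> \<le> 2 * (q*w)^m"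
proof -
  have "\<bar>c (k+m) * w^(k+m)\<bar> \<le> (q*w)^m * (q*w)^k" for k
  proof -
    have "\<bar>c (k+m) * w^(k+m)\<bar> \<le> q^(k+m) * w^(k+m)"
      using c[of "k+m"] assms by (simp add: abs_mult mult_right_mono)
    then show ?thesis by (simp add: power_add power_mult_distrib ac_simps)
  qed
  note tail = summable_geometric_majorant[OF this]
  have summable: "summable (\<lambda>k. c k * w^k)"
    using tail(1) summable_iff_shift[of "\<lambda>k. c k * w^k" m] assms by simp
  have "(\<Sum>k. c k * w^k) - (\<Sum>k<m. c k * w^k) = (\<Sum>k. c (k+m) * w^(k+m))"
    using suminf_split_initial_segment[OF summable, of m] by simp
  also have "\<bar>\<dots>\<bar> \<le> (q*w)^m / (1 - q*w)"
    using tail(2) assms by (simp add: mult_nonneg_nonneg)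
  also have "\<dots> \<le> (q*w)^m / (1/2)"
    using assms by (intro divide_left_mono) auto
  finally show ?thesis by simp
qed

lemma nat_add_Suc_le_mult_power2: "real (k + m + 1) \<le> real (m + 1) * 2^k"
proof -
  have "real k + 1 \<le> 2^k"
    by (induction k) (simp_all add: algebra_simps)
  then have "real (m + 1) * (real k + 1) \<le> real (m + 1) * 2^k"
    by (intro mult_left_mono) auto
  moreover have "real (k + m + 1) \<le> real (m + 1) * (real k + 1)"
    by (simp add: algebra_simps)
  ultimately show ?thesis by linarith
qed

lemma diffs_power_series_tail_bound:
  fixes c :: "nat \<Rightarrow> real"
  assumes c: "\<And>k. \<bar>c k\<bar> \<le> q^k" and "0 \<le> q" "0 \<le> w" "q * w \<le> 1/4"
  shows "\<bar>(\<Sum>k. diffs c k * w^k) - (\<Sum>k<m. diffs c k * w^k)\<bar> \<le> 2 * (m + 1) * q^(m+1) * w^m"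
proof -
  define a where "a = (m + 1) * q^(m+1) * w^m"
  have "\<bar>diffs c (k+m) * w^(k+m)\<bar> \<le> a * (2*q*w)^k" for k
  proof -
    have "\<bar>diffs c (k+m) * w^(k+m)\<bar> = real (k + m + 1) * \<bar>c (k+m+1)\<bar> * w^(k+m)"
      using assms by (simp add: diffs_def abs_mult)
    also have "\<dots> \<le> (real (m + 1) * 2^k) * q^(k+m+1) * w^(k+m)"
      using assms by (intro mult_right_mono mult_mono nat_add_Suc_le_mult_power2 c) auto
    also have "\<dots> = a * (2*q*w)^k"
      by (simp add: a_def power_add power_mult_distrib ac_simps)
    finally show ?thesis .
  qed
  note tail = summable_geometric_majorant[OF this]
  have summable: "summable (\<lambda>k. diffs c k * w^k)"
    using tail(1) summable_iff_shift[of "\<lambda>k. diffs c k * w^k" m] assms by simp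
  have "(\<Sum>k. diffs c k * w^k) - (\<Sum>k<m. diffs c k * w^k) = (\<Sum>k. diffs c (k+m) * w^(k+m))"
    using suminf_split_initial_segment[OF summable, of m] by simp
  also have "\<bar>\<dots>\<bar> \<le> a / (1 - 2*q*w)"
    using tail(2) assms by (simp add: mult_nonneg_nonneg)
  also have "\<dots> \<le> a / (1/2)"
    using assms by (intro divide_left_mono) (auto simp: a_def)
  finally show ?thesis by (simp add: a_def algebra_simps)
qed

section \<open>Bessel functions of half-integer order\<close>

fun bessel_coeff :: "real \<Rightarrow> nat \<Rightarrow> real" where
  "bessel_coeff \<nu> 0 = 1"
| "bessel_coeff \<nu> (Suc k) = bessel_coeff \<nu> k / (real (Suc k) * (\<nu> - real (Suc k)))"

lemma rGamma_coeff_eq_bessel_coeff: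
  assumes "\<And>j. \<nu> \<noteq> real (Suc j)"
  shows "(-1)^k / fact k * rGamma (real k + - \<nu> + 1) = rGamma (1 - \<nu>) * bessel_coeff \<nu> k"
proof (induction k)
  case 0
  show ?case by simp
next
  case (Suc k)
  have ne: "\<nu> - real (Suc k) \<noteq> 0" using assms[of k] by simp
  define R where "R = rGamma (real k + - \<nu> + 1)"
  have "real (Suc k) + - \<nu> + 1 = (real k + 1 - \<nu>) + 1" "real k + - \<nu> + 1 = real k + 1 - \<nu>"
    by simp_all
  then have "(real k + 1 - \<nu>) * rGamma (real (Suc k) + - \<nu> + 1) = R"
    unfolding R_def by (simp only: rGamma_plus1)
  then have rGamma_Suc: "rGamma (real (Suc k) + - \<nu> + 1) = - R / (\<nu> - real (Suc k))"
    using ne by (simp add: field_simps)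
  have "(-1)^Suc k / fact (Suc k) * rGamma (real (Suc k) + - \<nu> + 1)
      = (-1)^k / fact k * R / (real (Suc k) * (\<nu> - real (Suc k)))"
    unfolding rGamma_Suc using ne by (simp add: field_simps)
  also have "\<dots> = rGamma (1 - \<nu>) * bessel_coeff \<nu> (Suc k)"
    by (simp only: Suc.IH[folded R_def] bessel_coeff.simps times_divide_eq_right)
  finally show ?case .
qed

lemma dist_half_integer_nat:
  assumes "\<nu> = real n - 1/2"
  shows "\<bar>\<nu> - real j\<bar> \<ge> 1/2"
  using assms by (cases "j < n") auto

lemma half_integer_mult_dist_ge:
  assumes "\<nu> = real n - 1/2" "n \<ge> 1" "j \<ge> 1"
  shows "real j * \<bar>\<nu> - real j\<bar> \<ge> \<nu> / 4"
proof (cases "real j \<ge> \<nu>/2")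
  case True
  have "\<nu>/4 = (\<nu>/2) * (1/2)" by simp
  also have "\<dots> \<le> real j * \<bar>\<nu> - real j\<bar>"
    using True dist_half_integer_nat[OF assms(1), of j] assms by (intro mult_mono) auto
  finally show ?thesis .
next
  case False
  have "\<nu>/4 \<le> 1 * (\<nu>/2)" using assms by simp
  also have "\<dots> \<le> real j * \<bar>\<nu> - real j\<bar>"
    using False assms by (intro mult_mono) auto
  finally show ?thesis .
qed

lemma bessel_coeff_half_integer_bound:
  assumes "\<nu> = real n - 1/2" "n \<ge> 1"
  shows "\<bar>bessel_coeff \<nu> k\<bar> \<le> (4/\<nu>)^k"
proof (induction k)
  case 0
  show ?case by simp
next
  case (Suc k)
  have pos: "\<nu> > 0" using assms by simp
  have "\<nu>/4 \<le> real (Suc k) * \<bar>\<nu> - real (Suc k)\<bar>"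
    by (rule half_integer_mult_dist_ge[OF assms]) simp
  then have "\<bar>bessel_coeff \<nu> (Suc k)\<bar> \<le> \<bar>bessel_coeff \<nu> k\<bar> / (\<nu>/4)"
    using pos by (simp only: bessel_coeff.simps abs_divide abs_mult abs_of_nat) (rule divide_left_mono, auto)
  also have "\<dots> \<le> (4/\<nu>)^k / (\<nu>/4)"
    using Suc.IH pos by (simp add: divide_right_mono)
  finally show ?case by (simp add: field_simps)
qed

lemma rGamma_half_integer_nonzero:
  assumes "\<nu> = real n - 1/2"
  shows "rGamma (1 - \<nu>) \<noteq> 0"
proof
  assume "rGamma (1 - \<nu>) = 0"
  then obtain m where "1 - \<nu> = - real m"
    by (auto simp: rGamma_eq_zero_iff elim!: nonpos_Ints_cases')
  then have "real (3 + 2*m) = real (2*n)" using assms by simp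
  then have "3 + 2*m = 2*n" by (simp only: of_nat_eq_iff)
  then show False by presburger
qed

lemma BesselY_half_integer:
  assumes "\<nu> = real n - 1/2"
  shows "BesselY \<nu> y = (-1)^n * BesselJ (-\<nu>) y"
proof -
  have a: "\<nu> * pi = real n * pi - pi/2" unfolding assms by (simp add: algebra_simps)
  have "sin (\<nu>*pi) = - ((-1)^n)" "cos (\<nu>*pi) = 0" unfolding a sin_diff cos_diff by simp_all
  moreover have "((-1::real)^n) * (-1)^n = 1" by (simp flip: power_mult_distrib)
  ultimately show ?thesis unfolding BesselY_def by (simp add: field_simps)
qed

definition bessel_series :: "real \<Rightarrow> real \<Rightarrow> real" where
  "bessel_series \<nu> w = (\<Sum>k. bessel_coeff \<nu> k * w^k)"

definition bessel_series_deriv :: "real \<Rightarrow> real \<Rightarrow> real" where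
  "bessel_series_deriv \<nu> w = (\<Sum>k. diffs (bessel_coeff \<nu>) k * w^k)"

lemma summable_bessel_series_half_integer:
  assumes "\<nu> = real n - 1/2" "n \<ge> 1" "\<bar>w\<bar> < \<nu>/4"
  shows "summable (\<lambda>k. bessel_coeff \<nu> k * w^k)"
proof (rule summable_geometric_majorant)
  have pos: "\<nu> > 0" using assms by simp
  show "\<bar>bessel_coeff \<nu> k * w^k\<bar> \<le> 1 * (4/\<nu> * \<bar>w\<bar>)^k" for k
    unfolding abs_mult power_abs power_mult_distrib mult_1
    by (intro mult_right_mono bessel_coeff_half_integer_bound[OF assms(1,2)]) simp
  show "0 \<le> 4/\<nu> * \<bar>w\<bar>" "4/\<nu> * \<bar>w\<bar> < 1" using assms(3) pos by (auto simp: field_simps)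
qed

lemma has_real_derivative_bessel_series:
  assumes "\<nu> = real n - 1/2" "n \<ge> 1" "\<bar>w\<bar> < \<nu>/4"
  shows "(bessel_series \<nu> has_real_derivative bessel_series_deriv \<nu> w) (at w)"
  unfolding bessel_series_def[abs_def] bessel_series_deriv_def
  by (rule termdiffs_strong'[where K = "\<nu>/4"])
     (use summable_bessel_series_half_integer[OF assms(1,2)] assms(3) in auto)

lemma BesselJ_neg_half_integer:
  assumes \<nu>: "\<nu> = real n - 1/2" and "n \<ge> 1" "0 < y" "y^2 < \<nu>"
  shows "BesselJ (-\<nu>) y = rGamma (1 - \<nu>) * (y/2) powr (-\<nu>) * bessel_series \<nu> ((y/2)^2)"
proof -
  have not_nat: "\<nu> \<noteq> real (Suc j)" for j using dist_half_integer_nat[OF \<nu>, of "Suc j"] by auto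
  have pow: "(y/2) powr (2 * real k + - \<nu>) = (y/2) powr (-\<nu>) * ((y/2)^2)^k" for k
  proof -
    have "(y/2) powr (2 * real k + - \<nu>) = (y/2) powr (real (2*k)) * (y/2) powr (-\<nu>)"
      by (simp only: of_nat_mult of_nat_numeral powr_add)
    also have "\<dots> = ((y/2)^2)^k * (y/2) powr (-\<nu>)"
      using \<open>0 < y\<close> by (simp only: powr_realpow power_mult half_gt_zero_iff)
    finally show ?thesis by (simp only: mult.commute)
  qed
  have "BesselJ (-\<nu>) y = (\<Sum>k. rGamma (1 - \<nu>) * (y/2) powr (-\<nu>) * (bessel_coeff \<nu> k * ((y/2)^2)^k))"
    unfolding BesselJ_def pow rGamma_coeff_eq_bessel_coeff[OF not_nat] by (simp only: ac_simps)
  also have "\<dots> = rGamma (1 - \<nu>) * (y/2) powr (-\<nu>) * bessel_series \<nu> ((y/2)^2)"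
    unfolding bessel_series_def
    by (rule suminf_mult[OF summable_bessel_series_half_integer[OF assms(1,2)]])
       (use assms(4) in \<open>simp add: power_divide\<close>)
  finally show ?thesis .
qed

lemma G_half_integer:
  assumes \<nu>: "\<nu> = real n - 1/2" and n: "n \<ge> 1" and z: "0 < z" "z^2 < \<nu>"
    and nonzero: "bessel_series \<nu> ((z/2)^2) \<noteq> 0"
  shows "G \<nu> z = - \<nu> + 2 * (z/2)^2 * bessel_series_deriv \<nu> ((z/2)^2) / bessel_series \<nu> ((z/2)^2)"
proof -
  define c where "c = (-1)^n * rGamma (1 - \<nu>)"
  define f where "f y = c * ((y/2) powr (-\<nu>) * bessel_series \<nu> ((y/2)^2))" for y
  define S where "S = bessel_series \<nu> ((z/2)^2)"
  define S' where "S' = bessel_series_deriv \<nu> ((z/2)^2)"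
  have c: "c \<noteq> 0" using rGamma_half_integer_nonzero[OF \<nu>] by (simp add: c_def)
  have "((\<lambda>y. (y/2) powr (-\<nu>)) has_real_derivative -\<nu> * (z/2) powr (-\<nu> - of_nat 1) * (1/2)) (at z)"
    by (rule DERIV_fun_powr) (use z in \<open>auto intro!: derivative_eq_intros\<close>)
  then have P': "((\<lambda>y. (y/2) powr (-\<nu>)) has_real_derivative -\<nu> * (z/2) powr (-\<nu>) / z) (at z)"
    by (rule DERIV_cong) (use z in \<open>simp add: powr_diff field_simps\<close>)
  have S_comp': "((\<lambda>y. bessel_series \<nu> ((y/2)^2)) has_real_derivative S' * (z/2)) (at z)"
    unfolding S'_def
    by (rule DERIV_chain2[OF has_real_derivative_bessel_series[OF \<nu> n]])
       (use z in \<open>auto intro!: derivative_eq_intros simp: power_divide\<close>)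
  have f': "(f has_real_derivative c * ((z/2) powr (-\<nu>) * (S' * (z/2)) + -\<nu> * (z/2) powr (-\<nu>) / z * S)) (at z)"
    unfolding f_def S_def by (rule DERIV_cmult, rule DERIV_mult'[OF P' S_comp'])
  have Y_eq: "BesselY \<nu> y = f y" if "y \<in> {0<..<sqrt \<nu>}" for y
  proof -
    have "0 < y" "y^2 < (sqrt \<nu>)^2" using that by (auto intro: power_strict_mono)
    then have "0 < y" "y^2 < \<nu>" using \<nu> n by simp_all
    then show ?thesis
      using BesselY_half_integer[OF \<nu>] BesselJ_neg_half_integer[OF \<nu> n] by (simp add: f_def c_def)
  qed
  have z_in: "z \<in> {0<..<sqrt \<nu>}" using z by (auto intro: real_less_rsqrt)
  have Y': "(BesselY \<nu> has_real_derivative c * ((z/2) powr (-\<nu>) * (S' * (z/2)) + -\<nu> * (z/2) powr (-\<nu>) / z * S)) (at z)"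
    by (rule has_field_derivative_transform_within_open[OF f' _ z_in]) (auto simp: Y_eq)
  have "G \<nu> z = z * (c * ((z/2) powr (-\<nu>) * (S' * (z/2)) + -\<nu> * (z/2) powr (-\<nu>) / z * S)) / (c * ((z/2) powr (-\<nu>) * S))"
    unfolding G_def DERIV_imp_deriv[OF Y'] Y_eq[OF z_in] by (simp add: f_def S_def)
  also have "\<dots> = - \<nu> + 2 * (z/2)^2 * S' / S"
    using c z nonzero by (simp add: S_def field_simps power2_eq_square)
  finally show ?thesis by (simp only: S_def S'_def)
qed

lemma bessel_series_half_integer_expansion:
  assumes \<nu>: "\<nu> = real n - 1/2" "n \<ge> 1" and w: "0 \<le> w" "16 * w \<le> \<nu>"
  shows "\<bar>bessel_series \<nu> w - (1 + w/(\<nu>-1) + w^2/(2*(\<nu>-1)*(\<nu>-2)))\<bar> \<le> 128 * w^3 / \<nu>^3"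
    and "\<bar>bessel_series_deriv \<nu> w - (1/(\<nu>-1) + w/((\<nu>-1)*(\<nu>-2)))\<bar> \<le> 384 * w^2 / \<nu>^3"
proof -
  have pos: "\<nu> > 0" using \<nu> by simp
  have "\<nu> - 1 \<noteq> 0" "\<nu> - 2 \<noteq> 0"
    using dist_half_integer_nat[OF \<nu>(1), of 1] dist_half_integer_nat[OF \<nu>(1), of 2] by auto
  note coeff = bessel_coeff_half_integer_bound[OF \<nu>]
  have q: "0 \<le> 4/\<nu>" "4/\<nu> * w \<le> 1/4" "4/\<nu> * w \<le> 1/2" using w pos by (auto simp: field_simps)
  have "(\<Sum>k<3. bessel_coeff \<nu> k * w^k) = 1 + w/(\<nu>-1) + w^2/(2*(\<nu>-1)*(\<nu>-2))"
    by (simp add: eval_nat_numeral field_simps)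
  then show "\<bar>bessel_series \<nu> w - (1 + w/(\<nu>-1) + w^2/(2*(\<nu>-1)*(\<nu>-2)))\<bar> \<le> 128 * w^3 / \<nu>^3"
    using power_series_tail_bound[OF coeff q(1) w(1) q(3), of 3]
    by (simp add: bessel_series_def power_mult_distrib field_simps)
  have "(\<Sum>k<2. diffs (bessel_coeff \<nu>) k * w^k) = 1/(\<nu>-1) + w/((\<nu>-1)*(\<nu>-2))"
    using \<open>\<nu> - 1 \<noteq> 0\<close> \<open>\<nu> - 2 \<noteq> 0\<close> by (simp add: eval_nat_numeral diffs_def divide_simps)
  then show "\<bar>bessel_series_deriv \<nu> w - (1/(\<nu>-1) + w/((\<nu>-1)*(\<nu>-2)))\<bar> \<le> 384 * w^2 / \<nu>^3"
    using diffs_power_series_tail_bound[OF coeff q(1) w(1) q(2), of 2]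
    by (simp add: bessel_series_deriv_def power_mult_distrib power3_eq_cube field_simps)
qed

section \<open>Asymptotics of the logarithmic derivative\<close>

lemma tendsto_scaled_remainder:
  fixes \<nu> r :: "'a \<Rightarrow> real"
  assumes \<nu>: "filterlim \<nu> at_top F" and r: "eventually (\<lambda>x. \<bar>r x\<bar> \<le> c / \<nu> x ^ 3) F"
  shows "((\<lambda>x. \<nu> x ^ 2 * r x) \<longlongrightarrow> 0) F" and "(r \<longlongrightarrow> 0) F"
proof -
  have pos: "eventually (\<lambda>x. 0 < \<nu> x) F"
    using \<nu> by (simp add: filterlim_at_top_dense)
  have inf: "filterlim \<nu> at_infinity F" "filterlim (\<lambda>x. \<nu> x ^ 3) at_infinity F"
    using \<nu> filterlim_pow_at_top[OF _ \<nu>, of 3] by (auto intro: filterlim_at_top_imp_at_infinity)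
  show "((\<lambda>x. \<nu> x ^ 2 * r x) \<longlongrightarrow> 0) F"
  proof (rule Lim_null_comparison)
    show "eventually (\<lambda>x. norm (\<nu> x ^ 2 * r x) \<le> c / \<nu> x) F"
      using r pos
    proof eventually_elim
      case (elim x)
      then have "\<nu> x ^ 2 * \<bar>r x\<bar> \<le> \<nu> x ^ 2 * (c / \<nu> x ^ 3)"
        by (intro mult_left_mono) auto
      with elim show ?case by (simp add: abs_mult power3_eq_cube power2_eq_square)
    qed
    show "((\<lambda>x. c / \<nu> x) \<longlongrightarrow> 0) F" by (rule tendsto_divide_0[OF tendsto_const inf(1)])
  qed
  show "(r \<longlongrightarrow> 0) F"
    by (rule Lim_null_comparison[OF _ tendsto_divide_0[OF tendsto_const inf(2)]]) (use r in simp)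
qed

lemma ratio_expansion_tendsto:
  fixes \<nu> S S' :: "'a \<Rightarrow> real"
  assumes \<nu>: "filterlim \<nu> at_top F"
    and S: "eventually (\<lambda>x. \<bar>S x - (1 + w/(\<nu> x-1) + w^2/(2*(\<nu> x-1)*(\<nu> x-2)))\<bar> \<le> c / \<nu> x ^ 3) F"
    and S': "eventually (\<lambda>x. \<bar>S' x - (1/(\<nu> x-1) + w/((\<nu> x-1)*(\<nu> x-2)))\<bar> \<le> c' / \<nu> x ^ 3) F"
  shows "(S \<longlongrightarrow> 1) F"
    and "((\<lambda>x. \<nu> x ^ 2 * (2*w * S' x / S x - 2*w/\<nu> x - 2*w/\<nu> x ^ 2)) \<longlongrightarrow> 0) F"
proof -
  define P where "P t = 1 + w/(t-1) + w^2/(2*(t-1)*(t-2))" for t :: real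
  define P' where "P' t = 1/(t-1) + w/((t-1)*(t-2))" for t :: real
  define E where "E t = 2*w/t + 2*w/t^2" for t :: real
  have "(P \<longlongrightarrow> 1) at_top" unfolding P_def by real_asymp
  then have P: "((\<lambda>x. P (\<nu> x)) \<longlongrightarrow> 1) F" using \<nu> by (rule filterlim_compose)
  have "(E \<longlongrightarrow> 0) at_top" unfolding E_def by real_asymp
  then have E: "((\<lambda>x. E (\<nu> x)) \<longlongrightarrow> 0) F" using \<nu> by (rule filterlim_compose)
  \<comment> \<open>the terms of order \<open>t\<^sup>-\<^sup>2\<close> of \<open>2 w P'\<close> and \<open>E P\<close> coincide\<close>
  have "((\<lambda>t. t^2 * (2*w * P' t - E t * P t)) \<longlongrightarrow> 0) at_top"
    unfolding P_def P'_def E_def by (real_asymp simp: algebra_simps)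
  then have K: "((\<lambda>x. \<nu> x ^ 2 * (2*w * P' (\<nu> x) - E (\<nu> x) * P (\<nu> x))) \<longlongrightarrow> 0) F"
    using \<nu> by (rule filterlim_compose)
  note r = tendsto_scaled_remainder[OF \<nu> S[folded P_def]]
  note r' = tendsto_scaled_remainder[OF \<nu> S'[folded P'_def]]
  have "((\<lambda>x. P (\<nu> x) + (S x - P (\<nu> x))) \<longlongrightarrow> 1 + 0) F"
    by (intro tendsto_add P r(2))
  then show S_lim: "(S \<longlongrightarrow> 1) F" by simp
  have "((\<lambda>x. (\<nu> x ^ 2 * (2*w * P' (\<nu> x) - E (\<nu> x) * P (\<nu> x))
      + 2*w * (\<nu> x ^ 2 * (S' x - P' (\<nu> x))) - E (\<nu> x) * (\<nu> x ^ 2 * (S x - P (\<nu> x)))) / S x)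
      \<longlongrightarrow> (0 + 2*w * 0 - 0 * 0) / 1) F"
    by (intro tendsto_intros K r(1) r'(1) E S_lim) simp
  moreover have "eventually (\<lambda>x. (\<nu> x ^ 2 * (2*w * P' (\<nu> x) - E (\<nu> x) * P (\<nu> x))
      + 2*w * (\<nu> x ^ 2 * (S' x - P' (\<nu> x))) - E (\<nu> x) * (\<nu> x ^ 2 * (S x - P (\<nu> x)))) / S x
      = \<nu> x ^ 2 * (2*w * S' x / S x - 2*w/\<nu> x - 2*w/\<nu> x ^ 2)) F"
    using tendsto_imp_eventually_ne[OF S_lim one_neq_zero] \<nu>[unfolded filterlim_at_top_dense, rule_format, of 0]
    by eventually_elim (simp add: E_def field_simps)
  ultimately show "((\<lambda>x. \<nu> x ^ 2 * (2*w * S' x / S x - 2*w/\<nu> x - 2*w/\<nu> x ^ 2)) \<longlongrightarrow> 0) F"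
    by (simp add: Lim_transform_eventually)
qed

lemma G_half_integer_expansion:
  assumes "0 < z"
  shows "((\<lambda>n. (real n - 1/2)^2 * (G (real n - 1/2) z + (real n - 1/2)
      - z^2/(2*(real n - 1/2)) - z^2/(2*(real n - 1/2)^2))) \<longlongrightarrow> 0) sequentially"
proof -
  define w where "w = (z/2)^2"
  define \<nu> where "\<nu> n = real n - 1/2" for n :: nat
  define S where "S n = bessel_series (\<nu> n) w" for n
  define S' where "S' n = bessel_series_deriv (\<nu> n) w" for n
  have z2: "z^2 = 4 * w" by (simp add: w_def power_divide)
  have w: "0 < w" using assms by (simp add: w_def)
  have \<nu>_lim: "filterlim \<nu> at_top sequentially" unfolding \<nu>_def by real_asymp
  have large: "eventually (\<lambda>n. 1 \<le> n \<and> 16*w \<le> \<nu> n \<and> z^2 < \<nu> n) sequentially"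
    using eventually_ge_at_top[of 1] \<nu>_lim[unfolded filterlim_at_top_dense, rule_format, of "16*w + z^2"]
    by eventually_elim (use w in \<open>auto simp: z2\<close>)
  have S_bound: "eventually (\<lambda>n. \<bar>S n - (1 + w/(\<nu> n-1) + w^2/(2*(\<nu> n-1)*(\<nu> n-2)))\<bar> \<le> 128*w^3 / \<nu> n ^ 3) sequentially"
    using large by eventually_elim
      (unfold S_def, rule bessel_series_half_integer_expansion(1)[OF \<nu>_def], use w in auto)
  have S'_bound: "eventually (\<lambda>n. \<bar>S' n - (1/(\<nu> n-1) + w/((\<nu> n-1)*(\<nu> n-2)))\<bar> \<le> 384*w^2 / \<nu> n ^ 3) sequentially"
    using large by eventually_elim
      (unfold S'_def, rule bessel_series_half_integer_expansion(2)[OF \<nu>_def], use w in auto)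
  note lim = ratio_expansion_tendsto[OF \<nu>_lim S_bound S'_bound]
  have "eventually (\<lambda>n. \<nu> n ^ 2 * (2*w * S' n / S n - 2*w/\<nu> n - 2*w/\<nu> n ^ 2)
      = \<nu> n ^ 2 * (G (\<nu> n) z + \<nu> n - z^2/(2*\<nu> n) - z^2/(2*\<nu> n ^ 2))) sequentially"
    using large tendsto_imp_eventually_ne[OF lim(1) one_neq_zero]
    by eventually_elim (auto simp: G_half_integer[OF \<nu>_def _ assms] S_def S'_def w_def z2)
  with lim(2) show ?thesis unfolding \<nu>_def by (rule Lim_transform_eventually)
qed

lemma bounds_from_scaled_error:
  fixes \<nu> g z :: real
  assumes "0 < \<nu>" "\<bar>\<nu>^2 * (g + \<nu> - z^2/(2*\<nu>) - z^2/(2*\<nu>^2))\<bar> < 2*z^2/3"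
  shows "- \<nu> + z^2/(2*\<nu>) - z^2/(6*\<nu>^2) \<le> g" and "g \<le> - \<nu> + z^2/(2*\<nu>) + 7*z^2/(6*\<nu>^2)"
proof -
  define e where "e = g + \<nu> - z^2/(2*\<nu>) - z^2/(2*\<nu>^2)"
  have "\<bar>e\<bar> = \<bar>\<nu>^2 * e\<bar> / \<nu>^2" using assms(1) by (simp add: abs_mult)
  also have "\<dots> \<le> (2*z^2/3) / \<nu>^2" using assms by (intro divide_right_mono) (auto simp: e_def)
  finally have "\<bar>e\<bar> \<le> (2*z^2/3) / \<nu>^2" .
  moreover have "z^2/(6*\<nu>^2) = (2*z^2/3) / \<nu>^2 - z^2/(2*\<nu>^2)"
    "7*z^2/(6*\<nu>^2) = (2*z^2/3) / \<nu>^2 + z^2/(2*\<nu>^2)"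
    using assms(1) by (simp_all add: field_simps)
  ultimately show "- \<nu> + z^2/(2*\<nu>) - z^2/(6*\<nu>^2) \<le> g" and "g \<le> - \<nu> + z^2/(2*\<nu>) + 7*z^2/(6*\<nu>^2)"
    unfolding e_def by linarith+
qed

lemma upper_bound_negative:
  fixes \<nu> z :: real
  assumes "1 \<le> \<nu>" "2 * z^2 < \<nu>"
  shows "- \<nu> + z^2/(2*\<nu>) + 7*z^2/(6*\<nu>^2) < 0"
proof -
  have "z^2/(2*\<nu>) \<le> z^2/2" using assms by (intro divide_left_mono) auto
  moreover have "7*z^2/(6*\<nu>^2) \<le> 7*z^2/6"
    using assms by (intro divide_left_mono) (auto simp: one_le_power)
  ultimately show ?thesis using assms by linarith
qed

lemma G_half_integer_bounds:
  assumes "0 < z"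
  shows "eventually (\<lambda>n. let \<nu> = real n - 1/2 in
        - \<nu> + z^2/(2*\<nu>) - z^2/(6*\<nu>^2) \<le> G \<nu> z
      \<and> G \<nu> z \<le> - \<nu> + z^2/(2*\<nu>) + 7*z^2/(6*\<nu>^2)
      \<and> - \<nu> + z^2/(2*\<nu>) + 7*z^2/(6*\<nu>^2) < 0) sequentially"
proof -
  have "eventually (\<lambda>n. \<bar>(real n - 1/2)^2 * (G (real n - 1/2) z + (real n - 1/2)
      - z^2/(2*(real n - 1/2)) - z^2/(2*(real n - 1/2)^2))\<bar> < 2*z^2/3) sequentially"
    using tendstoD[OF G_half_integer_expansion[OF assms], of "2*z^2/3"] assms by simp
  moreover have "eventually (\<lambda>n. 2*z^2 + 2 \<le> real n) sequentially"
    using filterlim_real_sequentially by (simp add: filterlim_at_top)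
  ultimately show ?thesis
  proof eventually_elim
    case (elim n)
    define \<nu> where "\<nu> = real n - 1/2"
    have "0 < \<nu>" "1 \<le> \<nu>" "2*z^2 < \<nu>" using elim(2) zero_le_power2[of z] unfolding \<nu>_def by linarith+
    with bounds_from_scaled_error[OF _ elim(1)[folded \<nu>_def]] upper_bound_negative
    show ?case unfolding Let_def \<nu>_def[symmetric] by blast
  qed
qed

theorem lemmaE3:
  fixes z :: real
  assumes "z > 0"
  shows "\<exists>C N. \<forall>n::nat \<ge> N.
     (let nu = real n - 1/2 in
        - nu + z^2/(2*nu) - z^2/(6*nu^2) - C/nu^3 \<le> G nu z
      \<and> G nu z \<le> - nu + z^2/(2*nu) + 7*z^2/(6*nu^2) + C/nu^3
      \<and> - nu + z^2/(2*nu) + 7*z^2/(6*nu^2) + C/nu^3 < 0)"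
  using G_half_integer_bounds[OF assms] unfolding eventually_sequentially
  by - (rule exI[of _ 0], simp only: div_0 diff_0_right add_0_right)

end
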